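(* Assume condition (C) below holds. Then for every $\boldsymbol\theta\in\boldsymbol\Theta$ and all $a,b>0$, the test $(\hat T,\hat D)$ satisfies $\mathrm P_{\boldsymbol\theta}(\hat T<\infty)=1$, $$\mathrm P_{\boldsymbol\theta}(\hat D\setminus A(\boldsymbol\theta)\ne\emptyset)\le 1/a,\qquad \mathrm P_{\boldsymbol\theta}(A(\boldsymbol\theta)\setminus\hat D\ne\emptyset)\le 1/b.$$ In particular, $(\hat T,\hat D)\in\Delta(\alpha,\beta)$ when $a=1/\alpha$ and $b=1/\beta$, for any $\alpha,\beta\in(0,1)$.
   Context: Setting: $K\ge1$ mutually independent data streams $\{X_k(n),n\ge1\}$, $k\in[K]$, each i.i.d. with density $f_{\theta_k}$ w.r.t. a $\sigma$-finite measure $\nu$, $\{f_\theta:\theta\in\Theta\}$ a parametric family, $\Theta=\Theta^0\cup\Theta^1$ with $\Theta^0,\Theta^1$ nonempty disjoint (noise/signal parameters). $I(\theta,\theta')=\int f_\theta\log(f_\theta/f_{\theta'})d\nu$; standing assumption $\inf_{\theta\in\Theta^1}I(\theta^0,\theta)>0$ for all $\theta^0\in\Theta^0$ and $\inf_{\theta\in\Theta^0}I(\theta^1,\theta)>0$ for all $\theta^1\in\Theta^1$. $\boldsymbol\Theta=\{\boldsymbol\theta\in\Theta^K:\exists\theta^0\in\Theta^0,\theta^1\in\Theta^1$ with $\theta_k=\theta^0$ whenever $\theta_k\in\Theta^0$ and $\theta_k=\theta^1$ whenever $\theta_k\in\Theta^1\}$. $\mathrm P_{\boldsymbol\theta}$: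 stream $k$ has density $f_{\theta_k}$. $I(\boldsymbol\theta,\boldsymbol\theta')=\sum_kI(\theta_k,\theta_k')$. $A(\boldsymbol\theta)=\{k:\theta_k\in\Theta^1\}$. $\mathcal F(n)=\sigma(X_k(t):t\le n,k\in[K])$; a test is $(T,D)$ with $T$ a stopping time and $D\subseteq[K]$ $\mathcal F(T)$-measurable; $\Delta(\alpha,\beta)$ = tests with, for all $\boldsymbol\theta\in\boldsymbol\Theta$, $\mathrm P_{\boldsymbol\theta}(T<\infty)=1$, $\mathrm P_{\boldsymbol\theta}(D\setminus A(\boldsymbol\theta)\neq\emptyset)\le\alpha$, $\mathrm P_{\boldsymbol\theta}(A(\boldsymbol\theta)\setminus D\ne\emptyset)\le\beta$. $I^0(\boldsymbol\theta)=\inf\{I(\boldsymbol\theta,\boldsymbol\theta'):\boldsymbol\theta'\in\boldsymbol\Theta, A(\boldsymbol\theta')\setminus A(\boldsymbol\theta)\ne\emptyset\}$, $I^1(\boldsymbol\theta)=\inf\{I(\boldsymbol\theta,\boldsymbol\theta'):\boldsymbol\theta'\in\boldsymbol\Theta, A(\boldsymbol\theta)\setminus A(\boldsymbol\theta')\ne\emptyset\}$, $\inf\emptyset=+\infty$. The procedure: $L_k(n;\theta)=\prod_{t=1}^nf_\theta(X_k(t))$; $\boldsymbol L(n;\boldsymbol\theta')=\prod_kL_k(n;\theta'_k)$; $L_k^i(n)=\sup_{\theta\in\Theta^i}L_k(n;\theta)$, $i=0,1$. $\hat\theta_k(n)\in\Theta$ is a (near-)MLE: $L_k(n;\hat\theta_k(n))\ge\sup_{\theta\in\Theta}L_k(n;\theta)-1/n$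 (an exact maximizer if it exists), $\hat\theta_k(0)\in\Theta$ arbitrary. Adaptive joint likelihood: $\hat{\boldsymbol L}(0)=1$, $\hat{\boldsymbol L}(n)=\hat{\boldsymbol L}(n-1)\prod_{k}f_{\hat\theta_k(n-1)}(X_k(n))$. $\hat A(n)=\{k:L_k^1(n)\ge L_k^0(n)\}$. $\boldsymbol L^0(n)=\sup\{\boldsymbol L(n;\boldsymbol\theta'):\boldsymbol\theta'\in\boldsymbol\Theta, A(\boldsymbol\theta')\setminus\hat A(n)\neq\emptyset\}$, $\boldsymbol L^1(n)=\sup\{\boldsymbol L(n;\boldsymbol\theta'):\boldsymbol\theta'\in\boldsymbol\Theta,\hat A(n)\setminus A(\boldsymbol\theta')\ne\emptyset\}$ (supremum of empty set is $0$, and $x/0=+\infty$ for $x>0$). For thresholds $a,b>0$: $\hat T=\inf\{n\ge1:\hat{\boldsymbol L}(n)/\boldsymbol L^0(n)\ge b\text{ and }\hat{\boldsymbol L}(n)/\boldsymbol L^1(n)\ge a\}$, $\hat D=\hat A(\hat T)$. Condition (C): for every $\boldsymbol\theta\in\boldsymbol\Theta$, $\epsilon>0$, $i\in\{0,1\}$: $\sum_{n\ge1}\mathrm P_{\boldsymbol\theta}\big(\tfrac1n\log\frac{\hat{\boldsymbol L}(n)}{\boldsymbol L^i(n)}\le I^i(\boldsymbol\theta)-\epsilon\big)<\infty$. *)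

theory Defs
  imports "HOL-Probability.Probability"
begin

text \<open>Streams are indexed by k < K; time by n (observations at n >= 1).
  A sample point is omega :: nat * nat => 's, omega (k,n) = X_k(n).
  Parameters have type 'p; Theta = Th0 \<union> Th1; N is the base measure nu on the
  observation space; f theta is the density of f_theta w.r.t. N.\<close>

definition bTheta :: "nat \<Rightarrow> 'p set \<Rightarrow> 'p set \<Rightarrow> (nat \<Rightarrow> 'p) set" where
  "bTheta K Th0 Th1 = {th \<in> {..<K} \<rightarrow>\<^sub>E (Th0 \<union> Th1).
      \<exists>t0\<in>Th0. \<exists>t1\<in>Th1. \<forall>k<K. (th k \<in> Th0 \<longrightarrow> th k = t0) \<and> (th k \<in> Th1 \<longrightarrow> th k = t1)}"

definition sigA :: "nat \<Rightarrow> 'p set \<Rightarrow> (nat \<Rightarrow> 'p) \<Rightarrow> nat set" where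
  "sigA K Th1 th = {k. k < K \<and> th k \<in> Th1}"

text \<open>Kullback-Leibler divergence I(theta,theta') = int f_theta log(f_theta/f_theta') dnu,
  with conventions 0 log(0/y) = 0 and x log(x/0) = +infinity for x > 0;
  the integral is positive part minus negative part (the latter is always finite).\<close>
definition KLint :: "('p \<Rightarrow> 's \<Rightarrow> real) \<Rightarrow> 'p \<Rightarrow> 'p \<Rightarrow> 's \<Rightarrow> ereal" where
  "KLint f t t' x = (if f t x = 0 then 0 else if f t' x = 0 then \<infinity>
                     else ereal (f t x * ln (f t x / f t' x)))"

definition KL :: "'s measure \<Rightarrow> ('p \<Rightarrow> 's \<Rightarrow> real) \<Rightarrow> 'p \<Rightarrow> 'p \<Rightarrow> ereal" where
  "KL N f t t' = enn2ereal (\<integral>\<^sup>+ x. e2ennreal (max 0 (KLint f t t' x)) \<partial>N)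
                - enn2ereal (\<integral>\<^sup>+ x. e2ennreal (max 0 (- KLint f t t' x)) \<partial>N)"

definition bKL :: "nat \<Rightarrow> 's measure \<Rightarrow> ('p \<Rightarrow> 's \<Rightarrow> real) \<Rightarrow> (nat \<Rightarrow> 'p) \<Rightarrow> (nat \<Rightarrow> 'p) \<Rightarrow> ereal" where
  "bKL K N f th th' = (\<Sum>k<K. KL N f (th k) (th' k))"

definition I0 :: "nat \<Rightarrow> 'p set \<Rightarrow> 'p set \<Rightarrow> 's measure \<Rightarrow> ('p \<Rightarrow> 's \<Rightarrow> real) \<Rightarrow> (nat \<Rightarrow> 'p) \<Rightarrow> ereal" where
  "I0 K Th0 Th1 N f th = (INF th' \<in> {th' \<in> bTheta K Th0 Th1. sigA K Th1 th' - sigA K Th1 th \<noteq> {}}.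
                           bKL K N f th th')"

definition I1 :: "nat \<Rightarrow> 'p set \<Rightarrow> 'p set \<Rightarrow> 's measure \<Rightarrow> ('p \<Rightarrow> 's \<Rightarrow> real) \<Rightarrow> (nat \<Rightarrow> 'p) \<Rightarrow> ereal" where
  "I1 K Th0 Th1 N f th = (INF th' \<in> {th' \<in> bTheta K Th0 Th1. sigA K Th1 th - sigA K Th1 th' \<noteq> {}}.
                           bKL K N f th th')"

definition Omega :: "nat \<Rightarrow> 's measure \<Rightarrow> (nat \<times> nat \<Rightarrow> 's) measure" where
  "Omega K N = (\<Pi>\<^sub>M kn \<in> {..<K} \<times> UNIV. N)"

definition Pth :: "nat \<Rightarrow> 's measure \<Rightarrow> ('p \<Rightarrow> 's \<Rightarrow> real) \<Rightarrow> (nat \<Rightarrow> 'p) \<Rightarrow> (nat \<times> nat \<Rightarrow> 's) measure" where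
  "Pth K N f th = (\<Pi>\<^sub>M kn \<in> {..<K} \<times> UNIV. density N (\<lambda>x. ennreal (f (th (fst kn)) x)))"

definition Lk :: "('p \<Rightarrow> 's \<Rightarrow> real) \<Rightarrow> nat \<Rightarrow> nat \<Rightarrow> 'p \<Rightarrow> (nat \<times> nat \<Rightarrow> 's) \<Rightarrow> real" where
  "Lk f k n t \<omega> = (\<Prod>s\<in>{1..n}. f t (\<omega> (k, s)))"

definition bL :: "nat \<Rightarrow> ('p \<Rightarrow> 's \<Rightarrow> real) \<Rightarrow> nat \<Rightarrow> (nat \<Rightarrow> 'p) \<Rightarrow> (nat \<times> nat \<Rightarrow> 's) \<Rightarrow> real" where
  "bL K f n th \<omega> = (\<Prod>k<K. Lk f k n (th k) \<omega>)"

definition Lsup :: "('p \<Rightarrow> 's \<Rightarrow> real) \<Rightarrow> 'p set \<Rightarrow> nat \<Rightarrow> nat \<Rightarrow> (nat \<times> nat \<Rightarrow> 's) \<Rightarrow> ennreal" where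
  "Lsup f Th k n \<omega> = (SUP t \<in> Th. ennreal (Lk f k n t \<omega>))"

text \<open>Adaptive joint likelihood; thh k n omega is the estimator theta-hat_k(n).\<close>
definition Lhat :: "nat \<Rightarrow> ('p \<Rightarrow> 's \<Rightarrow> real) \<Rightarrow> (nat \<Rightarrow> nat \<Rightarrow> (nat \<times> nat \<Rightarrow> 's) \<Rightarrow> 'p)
                    \<Rightarrow> nat \<Rightarrow> (nat \<times> nat \<Rightarrow> 's) \<Rightarrow> real" where
  "Lhat K f thh n \<omega> = (\<Prod>s\<in>{1..n}. \<Prod>k<K. f (thh k (s - 1) \<omega>) (\<omega> (k, s)))"

definition Ahat :: "nat \<Rightarrow> 'p set \<Rightarrow> 'p set \<Rightarrow> ('p \<Rightarrow> 's \<Rightarrow> real) \<Rightarrow> nat \<Rightarrow> (nat \<times> nat \<Rightarrow> 's) \<Rightarrow> nat set" where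
  "Ahat K Th0 Th1 f n \<omega> = {k. k < K \<and> Lsup f Th0 k n \<omega> \<le> Lsup f Th1 k n \<omega>}"

definition LL0 :: "nat \<Rightarrow> 'p set \<Rightarrow> 'p set \<Rightarrow> ('p \<Rightarrow> 's \<Rightarrow> real) \<Rightarrow> nat \<Rightarrow> (nat \<times> nat \<Rightarrow> 's) \<Rightarrow> ennreal" where
  "LL0 K Th0 Th1 f n \<omega> = (SUP th' \<in> {th' \<in> bTheta K Th0 Th1. sigA K Th1 th' - Ahat K Th0 Th1 f n \<omega> \<noteq> {}}.
                           ennreal (bL K f n th' \<omega>))"

definition LL1 :: "nat \<Rightarrow> 'p set \<Rightarrow> 'p set \<Rightarrow> ('p \<Rightarrow> 's \<Rightarrow> real) \<Rightarrow> nat \<Rightarrow> (nat \<times> nat \<Rightarrow> 's) \<Rightarrow> ennreal" where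
  "LL1 K Th0 Th1 f n \<omega> = (SUP th' \<in> {th' \<in> bTheta K Th0 Th1. Ahat K Th0 Th1 f n \<omega> - sigA K Th1 th' \<noteq> {}}.
                           ennreal (bL K f n th' \<omega>))"

text \<open>Stopping condition; ennreal division gives x/0 = infinity for x > 0.\<close>
definition stopcond where
  "stopcond K Th0 Th1 f thh a b n \<omega> \<longleftrightarrow>
     ennreal b \<le> ennreal (Lhat K f thh n \<omega>) / LL0 K Th0 Th1 f n \<omega> \<and>
     ennreal a \<le> ennreal (Lhat K f thh n \<omega>) / LL1 K Th0 Th1 f n \<omega>"

definition That :: "nat \<Rightarrow> 'p set \<Rightarrow> 'p set \<Rightarrow> ('p \<Rightarrow> 's \<Rightarrow> real) \<Rightarrow> (nat \<Rightarrow> nat \<Rightarrow> (nat \<times> nat \<Rightarrow> 's) \<Rightarrow> 'p)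
                     \<Rightarrow> real \<Rightarrow> real \<Rightarrow> (nat \<times> nat \<Rightarrow> 's) \<Rightarrow> enat" where
  "That K Th0 Th1 f thh a b \<omega> =
     (if \<exists>n\<ge>1. stopcond K Th0 Th1 f thh a b n \<omega>
      then enat (LEAST n. n \<ge> 1 \<and> stopcond K Th0 Th1 f thh a b n \<omega>) else \<infinity>)"

definition Dhat :: "nat \<Rightarrow> 'p set \<Rightarrow> 'p set \<Rightarrow> ('p \<Rightarrow> 's \<Rightarrow> real) \<Rightarrow> (nat \<Rightarrow> nat \<Rightarrow> (nat \<times> nat \<Rightarrow> 's) \<Rightarrow> 'p)
                     \<Rightarrow> real \<Rightarrow> real \<Rightarrow> (nat \<times> nat \<Rightarrow> 's) \<Rightarrow> nat set" where
  "Dhat K Th0 Th1 f thh a b \<omega> = Ahat K Th0 Th1 f (the_enat (That K Th0 Th1 f thh a b \<omega>)) \<omega>"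

text \<open>theta-hat is an adapted (near-)MLE: theta-hat_k(n) lies in Theta, is F(n)-measurable
  (measurable and depending only on X_j(t), j<K, t<=n), and maximizes the likelihood up to 1/n
  (exactly, if a maximizer exists).\<close>
definition near_mle where
  "near_mle K Th0 Th1 N Pm f thh \<longleftrightarrow>
    (\<forall>k<K. \<forall>n. thh k n \<in> measurable (Omega K N) Pm \<and>
       (\<forall>\<omega>\<in>space (Omega K N). \<forall>\<omega>'\<in>space (Omega K N).
          (\<forall>j<K. \<forall>t\<in>{1..n}. \<omega>' (j, t) = \<omega> (j, t)) \<longrightarrow> thh k n \<omega>' = thh k n \<omega>) \<and>
       (\<forall>\<omega>\<in>space (Omega K N). thh k n \<omega> \<in> Th0 \<union> Th1 \<and>
          (n \<ge> 1 \<longrightarrow>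
             ennreal (Lk f k n (thh k n \<omega>) \<omega>) \<ge> Lsup f (Th0 \<union> Th1) k n \<omega> - ennreal (1 / real n) \<and>
             ((\<exists>t\<in>Th0 \<union> Th1. ennreal (Lk f k n t \<omega>) = Lsup f (Th0 \<union> Th1) k n \<omega>) \<longrightarrow>
                ennreal (Lk f k n (thh k n \<omega>) \<omega>) = Lsup f (Th0 \<union> Th1) k n \<omega>))))"

text \<open>Condition (C).  (1/n) log x \<le> I - eps is written as x \<le> exp(n (I - eps)); the threshold
  c = I - eps ranges over all reals below I (all reals if I = infinity).  Probabilities of
  possibly non-measurable events are outer probabilities.\<close>
definition condC where
  "condC K Th0 Th1 N f thh \<longleftrightarrow>
    (\<forall>th\<in>bTheta K Th0 Th1. \<forall>c::real.
      (ereal c < I0 K Th0 Th1 N f th \<longrightarrow>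
        (\<Sum>n. outer_measure_of (Pth K N f th)
           {\<omega>\<in>space (Pth K N f th). ennreal (Lhat K f thh (Suc n) \<omega>) / LL0 K Th0 Th1 f (Suc n) \<omega>
                                     \<le> ennreal (exp (real (Suc n) * c))}) < \<infinity>) \<and>
      (ereal c < I1 K Th0 Th1 N f th \<longrightarrow>
        (\<Sum>n. outer_measure_of (Pth K N f th)
           {\<omega>\<in>space (Pth K N f th). ennreal (Lhat K f thh (Suc n) \<omega>) / LL1 K Th0 Th1 f (Suc n) \<omega>
                                     \<le> ennreal (exp (real (Suc n) * c))}) < \<infinity>))"

text \<open>The class Delta(alpha,beta).  T is a stopping time and D is F(T)-measurable, expressed as:
  the events {T = n} and the value of D on {T = n} are determined by X_j(t), j<K, t<=n.\<close>
definition in_Delta where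
  "in_Delta K Th0 Th1 N f T D \<alpha> \<beta> \<longleftrightarrow>
    (\<forall>\<omega>\<in>space (Omega K N). D \<omega> \<subseteq> {..<K}) \<and>
    (\<forall>n. \<forall>\<omega>\<in>space (Omega K N). \<forall>\<omega>'\<in>space (Omega K N).
        (\<forall>j<K. \<forall>t\<in>{1..n}. \<omega>' (j, t) = \<omega> (j, t)) \<longrightarrow>
        (T \<omega> = enat n \<longleftrightarrow> T \<omega>' = enat n) \<and> (T \<omega> = enat n \<longrightarrow> D \<omega> = D \<omega>')) \<and>
    (\<forall>th\<in>bTheta K Th0 Th1.
       (AE \<omega> in Pth K N f th. T \<omega> < \<infinity>) \<and>
       outer_measure_of (Pth K N f th)
          {\<omega>\<in>space (Pth K N f th). T \<omega> < \<infinity> \<and> D \<omega> - sigA K Th1 th \<noteq> {}} \<le> ennreal \<alpha> \<and>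
       outer_measure_of (Pth K N f th)
          {\<omega>\<in>space (Pth K N f th). T \<omega> < \<infinity> \<and> sigA K Th1 th - D \<omega> \<noteq> {}} \<le> ennreal \<beta>)"

end

theory Submission
  imports Defs
begin

text \<open>
  Under \<open>P\<^sub>\<theta>\<close> the ratio \<open>\<Lambda>\<^sub>n\<close> of the adaptive likelihood to the true likelihood
  \<open>L(n; \<theta>)\<close> is a nonnegative supermartingale with \<open>\<Lambda>\<^sub>0 = 1\<close>: the estimates used at
  time \<open>n\<close> depend only on the data up to time \<open>n - 1\<close>, so each new factor (the density at
  the estimate over the true density, evaluated at the new observation) integrates to at most 1.
  By Ville's maximal inequality, \<open>\<Lambda>\<close> ever reaches \<open>a\<close> with probability at most \<open>1/a\<close>.
  If the test stops with a false discovery, then \<open>\<theta>\<close> itself competes in the supremum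
  \<open>L\<^sup>1\<close>, so \<open>\<Lambda>\<close> is at least \<open>a\<close> at the stopping time; a missed signal forces
  \<open>\<Lambda> \<ge> b\<close> through \<open>L\<^sup>0\<close> in the same way. Finally \<open>I\<^sup>0(\<theta>)\<close> and \<open>I\<^sup>1(\<theta>)\<close>
  are positive, so by condition (C) and Borel-Cantelli both stopping statistics eventually grow
  exponentially, and the test stops almost surely.
\<close>

lemma ennreal_inverse_antimono: "z \<le> y \<Longrightarrow> inverse y \<le> inverse (z::ennreal)"
  by (metis enn2ereal_nonneg ereal_inverse_antimono inverse_ennreal.rep_eq less_eq_ennreal.rep_eq)

lemma ennreal_divide_antimono: "z \<le> y \<Longrightarrow> x / y \<le> x / (z::ennreal)"
  unfolding divide_ennreal_def by (intro mult_left_mono ennreal_inverse_antimono) auto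

lemma ennreal_le_divide_of_mult_le_one:
  assumes "0 < a" and "ennreal a * x \<le> 1"
  shows "x \<le> ennreal (1 / a)"
proof -
  have "x = ennreal (1 / a) * (ennreal a * x)"
    using \<open>0 < a\<close> by (simp add: mult.assoc[symmetric] ennreal_mult[symmetric])
  also have "\<dots> \<le> ennreal (1 / a)"
    using mult_left_mono[OF assms(2)] by simp
  finally show ?thesis .
qed

lemma diff_le_mult_ln_divide:
  fixes u v :: real
  assumes "0 < u" "0 < v"
  shows "u - v \<le> u * ln (u / v)"
proof -
  have "u * ln (v / u) \<le> u * (v / u - 1)"
    using assms by (intro mult_left_mono ln_le_minus_one) auto
  also have "\<dots> = v - u"
    using assms by (simp add: field_simps)
  finally show ?thesis
    using assms by (simp add: ln_div algebra_simps)
qed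

lemma eventually_le_exp_mult:
  assumes "0 < (c::real)"
  shows "eventually (\<lambda>n. b \<le> exp (real (Suc n) * c)) sequentially"
proof (rule eventually_sequentiallyI)
  fix n assume "nat \<lceil>b / c\<rceil> \<le> n"
  then have "b \<le> real (Suc n) * c"
    using assms by (simp add: field_simps)
  also have "\<dots> \<le> exp (real (Suc n) * c)"
    using exp_ge_add_one_self[of "real (Suc n) * c"] by linarith
  finally show "b \<le> exp (real (Suc n) * c)" .
qed

lemma Least_eq_iff:
  fixes P :: "nat \<Rightarrow> bool"
  assumes "\<exists>n. P n"
  shows "(LEAST n. P n) = m \<longleftrightarrow> P m \<and> (\<forall>k<m. \<not> P k)"
  using assms by (metis LeastI_ex Least_equality not_less_Least leI)

lemma (in finite_measure) borel_cantelli_outer_AE: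
  assumes summable: "(\<Sum>n. outer_measure_of M (E n)) < \<infinity>"
    and E: "\<And>n. E n \<subseteq> space M"
  shows "AE w in M. eventually (\<lambda>n. w \<notin> E n) sequentially"
proof -
  obtain B where B: "\<And>n. B n \<in> sets M" "\<And>n. E n \<subseteq> B n"
      "\<And>n. outer_measure_of M (E n) = emeasure M (B n)"
    using outer_measure_of_attain[OF E] by metis
  have "summable (\<lambda>n. measure M (B n))"
    using summable B(3) by (intro summable_suminf_not_top) (auto simp: emeasure_eq_measure)
  then have "AE w in M. eventually (\<lambda>n. w \<in> space M - B n) sequentially"
    by (intro borel_cantelli_AE1 B(1)) (auto simp: emeasure_eq_measure)
  then show ?thesis
    by (rule eventually_mono) (auto elim!: eventually_mono dest: subsetD[OF B(2)])
qed

section \<open>Integrating out one coordinate of a product of probability spaces\<close>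

lemma nn_integral_PiM_fun_upd:
  assumes M: "\<And>j. j \<in> I \<Longrightarrow> prob_space (M j)" and i: "i \<in> I"
    and g: "g \<in> borel_measurable (PiM I M)"
  shows "(\<integral>\<^sup>+w. g w \<partial>PiM I M) = (\<integral>\<^sup>+X. \<integral>\<^sup>+x. g (X(i := x)) \<partial>M i \<partial>PiM (I - {i}) M)"
proof -
  interpret Mi: prob_space "M i" using M i by auto
  interpret rest: prob_space "PiM (I - {i}) M" using M by (intro prob_space_PiM) auto
  interpret pair_sigma_finite "M i" "PiM (I - {i}) M" ..
  have upd: "(\<lambda>(x, X). X(i := x)) \<in> measurable (M i \<Otimes>\<^sub>M PiM (I - {i}) M) (PiM I M)"
    using measurable_fun_upd[where I=I and J="I - {i}" and i=i and f=snd and h=fst and M=M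
      and N="M i \<Otimes>\<^sub>M PiM (I - {i}) M"] i by (auto simp: split_beta')
  have "distr (M i \<Otimes>\<^sub>M PiM (I - {i}) M) (PiM I M) (\<lambda>(x, X). X(i := x)) = PiM I M"
    using distr_pair_PiM_eq_PiM[of "I - {i}" M i] M i by (simp add: insert_absorb)
  then have "(\<integral>\<^sup>+w. g w \<partial>PiM I M) = (\<integral>\<^sup>+p. g (case p of (x, X) \<Rightarrow> X(i := x)) \<partial>(M i \<Otimes>\<^sub>M PiM (I - {i}) M))"
    by (metis g nn_integral_distr upd)
  also have "\<dots> = (\<integral>\<^sup>+X. \<integral>\<^sup>+x. g (X(i := x)) \<partial>M i \<partial>PiM (I - {i}) M)"
    using measurable_comp[OF upd g] Fubini'[of "\<lambda>x X. g (X(i := x))"]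
    by (simp add: nn_integral_snd[symmetric] split_beta comp_def)
  finally show ?thesis .
qed

lemma nn_integral_PiM_component:
  fixes h :: "('i \<Rightarrow> 'a) \<Rightarrow> 'a \<Rightarrow> ennreal"
  assumes M: "\<And>j. j \<in> I \<Longrightarrow> prob_space (M j)" and i: "i \<in> I"
    and h: "(\<lambda>(w, y). h w y) \<in> borel_measurable (PiM I M \<Otimes>\<^sub>M M i)"
    and h_indep: "\<And>w z y. w \<in> space (PiM I M) \<Longrightarrow> z \<in> space (M i) \<Longrightarrow> h (w(i := z)) y = h w y"
  shows "(\<integral>\<^sup>+w. h w (w i) \<partial>PiM I M) = (\<integral>\<^sup>+w. \<integral>\<^sup>+y. h w y \<partial>M i \<partial>PiM I M)"
proof -
  interpret Mi: prob_space "M i" using M i by auto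
  have diag: "(\<lambda>w. h w (w i)) \<in> borel_measurable (PiM I M)"
    using measurable_comp[OF measurable_Pair[OF measurable_ident_sets[OF refl]
          measurable_component_singleton[OF i]] h] by (simp add: comp_def)
  have fibre: "(\<lambda>w. \<integral>\<^sup>+y. h w y \<partial>M i) \<in> borel_measurable (PiM I M)"
    using Mi.borel_measurable_nn_integral[OF h] .
  have "(\<integral>\<^sup>+x. h (X(i := x)) x \<partial>M i) = (\<integral>\<^sup>+x. \<integral>\<^sup>+y. h (X(i := x)) y \<partial>M i \<partial>M i)"
    if X: "X \<in> space (PiM (I - {i}) M)" for X
  proof -
    \<comment> \<open>\<open>h\<close> ignores coordinate \<open>i\<close> of \<open>w\<close>, so the inner integral is constant in \<open>x\<close>\<close>
    have "h (X(i := x)) y = h (X(i := y)) y" if "x \<in> space (M i)" "y \<in> space (M i)" for x y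
    proof -
      have "X(i := y) \<in> space (PiM I M)"
        using X that i by (auto simp: space_PiM PiE_iff extensional_def)
      from h_indep[OF this \<open>x \<in> space (M i)\<close>] show ?thesis by simp
    qed
    then have "(\<integral>\<^sup>+y. h (X(i := x)) y \<partial>M i) = (\<integral>\<^sup>+y. h (X(i := y)) y \<partial>M i)"
      if "x \<in> space (M i)" for x
      using that by (intro nn_integral_cong) blast
    then have "(\<integral>\<^sup>+x. \<integral>\<^sup>+y. h (X(i := x)) y \<partial>M i \<partial>M i) = (\<integral>\<^sup>+x. \<integral>\<^sup>+y. h (X(i := y)) y \<partial>M i \<partial>M i)"
      by (rule nn_integral_cong)
    then show ?thesis
      by (simp add: Mi.emeasure_space_1)
  qed
  then show ?thesis
    using nn_integral_PiM_fun_upd[OF M i diag] nn_integral_PiM_fun_upd[OF M i fibre]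
    by (simp cong: nn_integral_cong)
qed

section \<open>Ville's maximal inequality\<close>

context
  fixes M :: "'a measure" and R :: "nat \<Rightarrow> 'a \<Rightarrow> ennreal" and a :: real
  assumes a: "0 < a"
    and R [measurable]: "\<And>n. R n \<in> borel_measurable M"
    and R0: "(\<integral>\<^sup>+w. R 0 w \<partial>M) \<le> 1"
    and supermartingale: "\<And>m.
      (\<integral>\<^sup>+w. indicator {w\<in>space M. \<forall>n\<in>{1..m}. R n w < ennreal a} w * R (Suc m) w \<partial>M) \<le>
      (\<integral>\<^sup>+w. indicator {w\<in>space M. \<forall>n\<in>{1..m}. R n w < ennreal a} w * R m w \<partial>M)"
begin

lemma ville_invariant:
  "ennreal a * emeasure M {w\<in>space M. \<exists>n\<in>{1..m}. ennreal a \<le> R n w} +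
    (\<integral>\<^sup>+w. indicator {w\<in>space M. \<forall>n\<in>{1..m}. R n w < ennreal a} w * R m w \<partial>M) \<le> 1"
proof -
  define E where "E m = {w\<in>space M. \<exists>n\<in>{1..m}. ennreal a \<le> R n w}" for m
  define H where "H m = {w\<in>space M. \<forall>n\<in>{1..m}. R n w < ennreal a}" for m
  have [measurable]: "E m \<in> sets M" "H m \<in> sets M" for m
    unfolding E_def H_def by measurable
  have "ennreal a * emeasure M (E m) + (\<integral>\<^sup>+w. indicator (H m) w * R m w \<partial>M) \<le> 1"
  proof (induction m)
    case 0
    have "E 0 = {}" "H 0 = space M" by (auto simp: E_def H_def)
    then show ?case
      using R0 by (simp cong: nn_integral_cong)
  next
    case (Suc m)
    define D where "D = {w\<in>H m. ennreal a \<le> R (Suc m) w}"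
    have [measurable]: "D \<in> sets M" unfolding D_def by measurable
    have E_Suc: "E (Suc m) = E m \<union> D" and disjoint: "E m \<inter> D = {}"
      by (auto simp: E_def D_def H_def atLeastAtMostSuc_conv not_le)
    have "emeasure M (E (Suc m)) = emeasure M (E m) + emeasure M D"
      unfolding E_Suc using disjoint by (intro plus_emeasure[symmetric]) auto
    moreover have "ennreal a * emeasure M D \<le> (\<integral>\<^sup>+w. indicator D w * R (Suc m) w \<partial>M)"
      by (subst nn_integral_cmult_indicator[symmetric])
         (auto intro!: nn_integral_mono simp: D_def indicator_def)
    moreover have "indicator (H m) w * R (Suc m) w =
        indicator D w * R (Suc m) w + indicator (H (Suc m)) w * R (Suc m) w" for w
      by (auto simp: indicator_def D_def H_def atLeastAtMostSuc_conv not_le)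
    then have "(\<integral>\<^sup>+w. indicator (H m) w * R (Suc m) w \<partial>M) =
        (\<integral>\<^sup>+w. indicator D w * R (Suc m) w \<partial>M) + (\<integral>\<^sup>+w. indicator (H (Suc m)) w * R (Suc m) w \<partial>M)"
      by (simp add: nn_integral_add)
    ultimately have "ennreal a * emeasure M (E (Suc m)) + (\<integral>\<^sup>+w. indicator (H (Suc m)) w * R (Suc m) w \<partial>M)
        \<le> ennreal a * emeasure M (E m) + (\<integral>\<^sup>+w. indicator (H m) w * R (Suc m) w \<partial>M)"
      by (simp add: distrib_left add.assoc add_left_mono add_right_mono)
    also have "\<dots> \<le> ennreal a * emeasure M (E m) + (\<integral>\<^sup>+w. indicator (H m) w * R m w \<partial>M)"
      using supermartingale[of m] by (simp add: H_def add_left_mono)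
    finally show ?case
      using Suc.IH by simp
  qed
  then show ?thesis
    by (simp add: E_def H_def)
qed

lemma ville_inequality: "emeasure M {w\<in>space M. \<exists>n\<ge>1. ennreal a \<le> R n w} \<le> ennreal (1 / a)"
proof -
  define E where "E m = {w\<in>space M. \<exists>n\<in>{1..m}. ennreal a \<le> R n w}" for m
  have "{w\<in>space M. \<exists>n\<ge>1. ennreal a \<le> R n w} = (\<Union>m. E m)"
    unfolding E_def by fastforce
  moreover have "emeasure M (\<Union>m. E m) = (SUP m. emeasure M (E m))"
    unfolding E_def by (intro SUP_emeasure_incseq[symmetric]) (auto simp: incseq_def, measurable)
  moreover have "emeasure M (E m) \<le> ennreal (1 / a)" for m
    using ville_invariant[of m] a unfolding E_def
    by (intro ennreal_le_divide_of_mult_le_one) (auto intro: order_trans[OF add_increasing2])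
  ultimately show ?thesis
    by (simp add: SUP_least)
qed

end

section \<open>The multistream model\<close>

lemma That_eq_enat_iff:
  "That K Th0 Th1 f thh a b w = enat n \<longleftrightarrow>
     1 \<le> n \<and> stopcond K Th0 Th1 f thh a b n w \<and>
     (\<forall>m. 1 \<le> m \<longrightarrow> m < n \<longrightarrow> \<not> stopcond K Th0 Th1 f thh a b m w)"
proof (cases "\<exists>n\<ge>1. stopcond K Th0 Th1 f thh a b n w")
  case True
  then have "\<exists>n. 1 \<le> n \<and> stopcond K Th0 Th1 f thh a b n w" by blast
  from Least_eq_iff[OF this] True show ?thesis
    unfolding That_def by auto
qed (auto simp: That_def)

lemma That_finite_E:
  assumes "That K Th0 Th1 f thh a b w < \<infinity>"
  obtains n where "That K Th0 Th1 f thh a b w = enat n" "1 \<le> n" "stopcond K Th0 Th1 f thh a b n w"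
  using assms That_eq_enat_iff by (metis less_infinityE)

locale multistream_test =
  fixes K :: nat and Th0 Th1 :: "'p set" and N :: "'s measure" and Pm :: "'p measure"
    and f :: "'p \<Rightarrow> 's \<Rightarrow> real"
    and thh :: "nat \<Rightarrow> nat \<Rightarrow> (nat \<times> nat \<Rightarrow> 's) \<Rightarrow> 'p"
  assumes dens: "\<And>t. t \<in> Th0 \<union> Th1 \<Longrightarrow> f t \<in> borel_measurable N \<and> (\<forall>x\<in>space N. f t x \<ge> 0)
                       \<and> (\<integral>\<^sup>+ x. ennreal (f t x) \<partial>N) = 1"
    and fmeas: "(\<lambda>(t, x). f t x) \<in> borel_measurable (Pm \<Otimes>\<^sub>M N)"
    and mle: "near_mle K Th0 Th1 N Pm f thh"
begin

lemma f_measurable: "t \<in> Th0 \<union> Th1 \<Longrightarrow> f t \<in> borel_measurable N"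
  and f_nonneg: "t \<in> Th0 \<union> Th1 \<Longrightarrow> x \<in> space N \<Longrightarrow> 0 \<le> f t x"
  and nn_integral_f: "t \<in> Th0 \<union> Th1 \<Longrightarrow> (\<integral>\<^sup>+ x. ennreal (f t x) \<partial>N) = 1"
  using dens by blast+

lemma space_Omega: "space (Omega K N) = ({..<K} \<times> UNIV) \<rightarrow>\<^sub>E space N"
  by (simp add: Omega_def space_PiM)

lemma Omega_obs_in_space: "w \<in> space (Omega K N) \<Longrightarrow> j < K \<Longrightarrow> w (j, s) \<in> space N"
  by (auto simp: space_Omega)

lemma Omega_fun_upd_in_space:
  "w \<in> space (Omega K N) \<Longrightarrow> j < K \<Longrightarrow> z \<in> space N \<Longrightarrow> w((j, s) := z) \<in> space (Omega K N)"
  by (auto simp: space_Omega PiE_iff extensional_def)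

lemma thh_measurable: "k < K \<Longrightarrow> thh k n \<in> measurable (Omega K N) Pm"
  and thh_in: "k < K \<Longrightarrow> w \<in> space (Omega K N) \<Longrightarrow> thh k n w \<in> Th0 \<union> Th1"
  using mle unfolding near_mle_def by blast+

lemma bTheta_in: "th \<in> bTheta K Th0 Th1 \<Longrightarrow> k < K \<Longrightarrow> th k \<in> Th0 \<union> Th1"
  by (auto simp: bTheta_def)

lemma prob_space_density_f:
  assumes "t \<in> Th0 \<union> Th1"
  shows "prob_space (density N (\<lambda>x. ennreal (f t x)))"
proof
  have "emeasure (density N (\<lambda>x. ennreal (f t x))) (space N) = (\<integral>\<^sup>+x. ennreal (f t x) \<partial>N)"
    using f_measurable[OF assms] by (simp add: emeasure_density cong: nn_integral_cong)
  then show "emeasure (density N (\<lambda>x. ennreal (f t x))) (space (density N (\<lambda>x. ennreal (f t x)))) = 1"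
    using nn_integral_f[OF assms] by simp
qed

lemma prob_space_Pth: "th \<in> bTheta K Th0 Th1 \<Longrightarrow> prob_space (Pth K N f th)"
  unfolding Pth_def by (intro prob_space_PiM prob_space_density_f bTheta_in) auto

lemma sets_Pth [measurable_cong]: "sets (Pth K N f th) = sets (Omega K N)"
  unfolding Pth_def Omega_def by (rule sets_PiM_cong) auto

lemma space_Pth: "space (Pth K N f th) = space (Omega K N)"
  using sets_Pth by (rule sets_eq_imp_space_eq)

lemma measurable_obs: "j < K \<Longrightarrow> (\<lambda>w. w (j, s)) \<in> measurable (Omega K N) N"
  unfolding Omega_def by (rule measurable_component_singleton) auto

lemma borel_measurable_f_obs:
  "j < K \<Longrightarrow> t \<in> Th0 \<union> Th1 \<Longrightarrow> (\<lambda>w. f t (w (j, s))) \<in> borel_measurable (Omega K N)"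
  using measurable_comp[OF measurable_obs f_measurable] by (simp add: comp_def)

lemma borel_measurable_f_thh_obs:
  assumes "k < K" "j < K"
  shows "(\<lambda>w. f (thh k n w) (w (j, s))) \<in> borel_measurable (Omega K N)"
  using measurable_comp[OF measurable_Pair[OF thh_measurable measurable_obs] fmeas] assms
  by (simp add: comp_def)

lemma borel_measurable_Lhat: "Lhat K f thh n \<in> borel_measurable (Omega K N)"
  unfolding Lhat_def by (intro borel_measurable_prod borel_measurable_f_thh_obs) auto

lemma borel_measurable_bL: "th \<in> bTheta K Th0 Th1 \<Longrightarrow> bL K f n th \<in> borel_measurable (Omega K N)"
  unfolding bL_def Lk_def by (intro borel_measurable_prod borel_measurable_f_obs bTheta_in) auto

lemma Lhat_nonneg: "w \<in> space (Omega K N) \<Longrightarrow> 0 \<le> Lhat K f thh n w"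
  unfolding Lhat_def by (intro prod_nonneg ballI f_nonneg thh_in Omega_obs_in_space) auto

lemma bL_nonneg: "th \<in> bTheta K Th0 Th1 \<Longrightarrow> w \<in> space (Omega K N) \<Longrightarrow> 0 \<le> bL K f n th w"
  unfolding bL_def Lk_def by (intro prod_nonneg ballI f_nonneg bTheta_in Omega_obs_in_space) auto

lemma Lhat_Suc: "Lhat K f thh (Suc n) w = Lhat K f thh n w * (\<Prod>k<K. f (thh k n w) (w (k, Suc n)))"
  unfolding Lhat_def by (simp add: prod.nat_ivl_Suc' mult.commute)

lemma bL_Suc: "bL K f (Suc n) th w = bL K f n th w * (\<Prod>k<K. f (th k) (w (k, Suc n)))"
  unfolding bL_def Lk_def by (simp add: prod.nat_ivl_Suc' prod.distrib mult.commute)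

lemma KLint_negative_part_le:
  assumes t: "t \<in> Th0 \<union> Th1" and t': "t' \<in> Th0 \<union> Th1" and x: "x \<in> space N"
  shows "e2ennreal (max 0 (- KLint f t t' x)) + ennreal (f t x) \<le>
         e2ennreal (max 0 (KLint f t t' x)) + ennreal (f t' x)"
proof -
  have u: "0 \<le> f t x" and v: "0 \<le> f t' x"
    using f_nonneg t t' x by auto
  show ?thesis
  proof (cases "f t x = 0 \<or> f t' x = 0")
    case True
    with u show ?thesis by (auto simp: KLint_def)
  next
    case False
    define r where "r = f t x * ln (f t x / f t' x)"
    have "f t x - f t' x \<le> r"
      unfolding r_def using False u v by (intro diff_le_mult_ln_divide) auto
    moreover have "KLint f t t' x = ereal r"
      using False by (simp add: KLint_def r_def)
    ultimately show ?thesis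
      using u v by (cases "0 \<le> r") (auto simp: max_def ennreal_plus[symmetric] simp del: ennreal_plus)
  qed
qed

lemma borel_measurable_KLint:
  "t \<in> Th0 \<union> Th1 \<Longrightarrow> t' \<in> Th0 \<union> Th1 \<Longrightarrow> KLint f t t' \<in> borel_measurable N"
  unfolding KLint_def[abs_def] using f_measurable[of t] f_measurable[of t'] by measurable

lemma KL_nonneg:
  assumes t: "t \<in> Th0 \<union> Th1" and t': "t' \<in> Th0 \<union> Th1"
  shows "0 \<le> KL N f t t'"
proof -
  note [measurable] = borel_measurable_KLint[OF t t'] f_measurable[OF t] f_measurable[OF t']
  have "(\<integral>\<^sup>+x. e2ennreal (max 0 (- KLint f t t' x)) \<partial>N) + 1 =
        (\<integral>\<^sup>+x. e2ennreal (max 0 (- KLint f t t' x)) + ennreal (f t x) \<partial>N)"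
    by (simp add: nn_integral_add nn_integral_f[OF t])
  also have "\<dots> \<le> (\<integral>\<^sup>+x. e2ennreal (max 0 (KLint f t t' x)) + ennreal (f t' x) \<partial>N)"
    by (intro nn_integral_mono KLint_negative_part_le[OF t t'])
  also have "\<dots> = (\<integral>\<^sup>+x. e2ennreal (max 0 (KLint f t t' x)) \<partial>N) + 1"
    by (simp add: nn_integral_add nn_integral_f[OF t'])
  finally have "(\<integral>\<^sup>+x. e2ennreal (max 0 (- KLint f t t' x)) \<partial>N) \<le> (\<integral>\<^sup>+x. e2ennreal (max 0 (KLint f t t' x)) \<partial>N)"
    by simp
  then show ?thesis
    unfolding KL_def by (simp add: ereal_diff_positive less_eq_ennreal.rep_eq)
qed

lemma KL_le_bKL:
  assumes th: "th \<in> bTheta K Th0 Th1" and th': "th' \<in> bTheta K Th0 Th1" and k: "k < K"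
  shows "KL N f (th k) (th' k) \<le> bKL K N f th th'"
proof -
  have "0 \<le> (\<Sum>j\<in>{..<K} - {k}. KL N f (th j) (th' j))"
    using bTheta_in[OF th] bTheta_in[OF th'] by (intro sum_nonneg KL_nonneg) auto
  then show ?thesis
    unfolding bKL_def using k by (simp add: sum.remove[of "{..<K}" k] ereal_le_add_self)
qed

lemma bTheta_E:
  assumes "th \<in> bTheta K Th0 Th1"
  obtains t0 t1 where "t0 \<in> Th0" "t1 \<in> Th1"
    "\<And>k. k < K \<Longrightarrow> th k \<in> Th0 \<Longrightarrow> th k = t0" "\<And>k. k < K \<Longrightarrow> th k \<in> Th1 \<Longrightarrow> th k = t1"
  using assms unfolding bTheta_def by blast

lemma I0_pos:
  assumes th: "th \<in> bTheta K Th0 Th1"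
    and sep0: "\<And>t0. t0 \<in> Th0 \<Longrightarrow> (INF t \<in> Th1. KL N f t0 t) > 0"
  shows "0 < I0 K Th0 Th1 N f th"
proof -
  obtain t0 where t0: "t0 \<in> Th0" and noise: "\<And>k. k < K \<Longrightarrow> th k \<in> Th0 \<Longrightarrow> th k = t0"
    using bTheta_E[OF th] by metis
  have "(INF t \<in> Th1. KL N f t0 t) \<le> bKL K N f th th'"
    if th': "th' \<in> bTheta K Th0 Th1" and "k < K" "th' k \<in> Th1" "th k \<notin> Th1" for th' k
  proof -
    have "th k = t0"
      using noise bTheta_in[OF th] that by blast
    then have "(INF t \<in> Th1. KL N f t0 t) \<le> KL N f (th k) (th' k)"
      using that by (auto intro: INF_lower)
    also have "\<dots> \<le> bKL K N f th th'"
      using KL_le_bKL[OF th th' \<open>k < K\<close>] .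
    finally show ?thesis .
  qed
  then have "(INF t \<in> Th1. KL N f t0 t) \<le> I0 K Th0 Th1 N f th"
    unfolding I0_def by (intro INF_greatest) (auto simp: sigA_def)
  with sep0[OF t0] show ?thesis by (rule less_le_trans)
qed

lemma I1_pos:
  assumes th: "th \<in> bTheta K Th0 Th1"
    and sep1: "\<And>t1. t1 \<in> Th1 \<Longrightarrow> (INF t \<in> Th0. KL N f t1 t) > 0"
  shows "0 < I1 K Th0 Th1 N f th"
proof -
  obtain t1 where t1: "t1 \<in> Th1" and signal: "\<And>k. k < K \<Longrightarrow> th k \<in> Th1 \<Longrightarrow> th k = t1"
    using bTheta_E[OF th] by metis
  have "(INF t \<in> Th0. KL N f t1 t) \<le> bKL K N f th th'"
    if th': "th' \<in> bTheta K Th0 Th1" and "k < K" "th k \<in> Th1" "th' k \<notin> Th1" for th' k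
  proof -
    have "th' k \<in> Th0"
      using bTheta_in[OF th'] that by blast
    then have "(INF t \<in> Th0. KL N f t1 t) \<le> KL N f (th k) (th' k)"
      using signal that by (auto intro: INF_lower)
    also have "\<dots> \<le> bKL K N f th th'"
      using KL_le_bKL[OF th th' \<open>k < K\<close>] .
    finally show ?thesis .
  qed
  then have "(INF t \<in> Th0. KL N f t1 t) \<le> I1 K Th0 Th1 N f th"
    unfolding I1_def by (intro INF_greatest) (auto simp: sigA_def)
  with sep1[OF t1] show ?thesis by (rule less_le_trans)
qed

definition same_past :: "nat \<Rightarrow> (nat \<times> nat \<Rightarrow> 's) \<Rightarrow> (nat \<times> nat \<Rightarrow> 's) \<Rightarrow> bool" where
  "same_past n w w' \<longleftrightarrow> (\<forall>j<K. \<forall>t\<in>{1..n}. w' (j, t) = w (j, t))"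

lemma same_past_mono: "same_past n w w' \<Longrightarrow> m \<le> n \<Longrightarrow> same_past m w w'"
  by (auto simp: same_past_def)

lemma same_past_fun_upd: "n < s \<Longrightarrow> same_past n w (w((j, s) := z))"
  by (auto simp: same_past_def)

lemma thh_same_past:
  "same_past n w w' \<Longrightarrow> k < K \<Longrightarrow> w \<in> space (Omega K N) \<Longrightarrow> w' \<in> space (Omega K N) \<Longrightarrow>
    thh k n w' = thh k n w"
  using mle unfolding near_mle_def same_past_def by blast

lemma Lk_same_past: "same_past n w w' \<Longrightarrow> k < K \<Longrightarrow> Lk f k n t w' = Lk f k n t w"
  unfolding Lk_def same_past_def by (intro prod.cong) auto

lemma bL_same_past: "same_past n w w' \<Longrightarrow> bL K f n th w' = bL K f n th w"
  unfolding bL_def by (intro prod.cong) (auto simp: Lk_same_past)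

lemma Ahat_same_past: "same_past n w w' \<Longrightarrow> Ahat K Th0 Th1 f n w' = Ahat K Th0 Th1 f n w"
  unfolding Ahat_def Lsup_def by (auto simp: Lk_same_past)

lemma LL0_same_past: "same_past n w w' \<Longrightarrow> LL0 K Th0 Th1 f n w' = LL0 K Th0 Th1 f n w"
  unfolding LL0_def by (simp add: Ahat_same_past bL_same_past)

lemma LL1_same_past: "same_past n w w' \<Longrightarrow> LL1 K Th0 Th1 f n w' = LL1 K Th0 Th1 f n w"
  unfolding LL1_def by (simp add: Ahat_same_past bL_same_past)

lemma Lhat_same_past:
  assumes "same_past n w w'" "w \<in> space (Omega K N)" "w' \<in> space (Omega K N)"
  shows "Lhat K f thh n w' = Lhat K f thh n w"
  unfolding Lhat_def
proof (intro prod.cong refl)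
  fix s k assume "s \<in> {1..n}" "k \<in> {..<K}"
  moreover from this have "thh k (s - 1) w' = thh k (s - 1) w"
    using assms by (intro thh_same_past[OF same_past_mono]) auto
  ultimately show "f (thh k (s - 1) w') (w' (k, s)) = f (thh k (s - 1) w) (w (k, s))"
    using assms(1) by (simp add: same_past_def)
qed

lemma stopcond_same_past:
  assumes "same_past n w w'" "w \<in> space (Omega K N)" "w' \<in> space (Omega K N)"
  shows "stopcond K Th0 Th1 f thh a b n w' = stopcond K Th0 Th1 f thh a b n w"
  using assms by (simp add: stopcond_def Lhat_same_past LL0_same_past LL1_same_past)

lemma That_same_past:
  assumes "same_past n w w'" "w \<in> space (Omega K N)" "w' \<in> space (Omega K N)"
  shows "That K Th0 Th1 f thh a b w' = enat n \<longleftrightarrow> That K Th0 Th1 f thh a b w = enat n"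
  unfolding That_eq_enat_iff
  using stopcond_same_past[OF same_past_mono[OF assms(1)] assms(2,3)] by auto

lemma Dhat_subset: "Dhat K Th0 Th1 f thh a b w \<subseteq> {..<K}"
  by (auto simp: Dhat_def Ahat_def)

lemma That_Dhat_adapted:
  "\<forall>n. \<forall>w\<in>space (Omega K N). \<forall>w'\<in>space (Omega K N). (\<forall>j<K. \<forall>t\<in>{1..n}. w' (j, t) = w (j, t)) \<longrightarrow>
     (That K Th0 Th1 f thh a b w = enat n \<longleftrightarrow> That K Th0 Th1 f thh a b w' = enat n) \<and>
     (That K Th0 Th1 f thh a b w = enat n \<longrightarrow> Dhat K Th0 Th1 f thh a b w = Dhat K Th0 Th1 f thh a b w')"
proof (intro allI ballI impI)
  fix n w w' assume w: "w \<in> space (Omega K N)" and w': "w' \<in> space (Omega K N)"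
    and "\<forall>j<K. \<forall>t\<in>{1..n}. w' (j, t) = w (j, t)"
  then have past: "same_past n w w'"
    by (simp add: same_past_def)
  have stop: "That K Th0 Th1 f thh a b w' = enat n \<longleftrightarrow> That K Th0 Th1 f thh a b w = enat n"
    by (rule That_same_past[OF past w w'])
  show "(That K Th0 Th1 f thh a b w = enat n \<longleftrightarrow> That K Th0 Th1 f thh a b w' = enat n) \<and>
     (That K Th0 Th1 f thh a b w = enat n \<longrightarrow> Dhat K Th0 Th1 f thh a b w = Dhat K Th0 Th1 f thh a b w')"
  proof (intro conjI impI)
    assume "That K Th0 Th1 f thh a b w = enat n"
    moreover from this stop have "That K Th0 Th1 f thh a b w' = enat n" by blast
    ultimately show "Dhat K Th0 Th1 f thh a b w = Dhat K Th0 Th1 f thh a b w'"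
      by (simp add: Dhat_def Ahat_same_past[OF past])
  qed (use stop in blast)
qed

end

section \<open>The likelihood ratio process\<close>

locale multistream_test_at = multistream_test K Th0 Th1 N Pm f thh
  for K :: nat and Th0 Th1 :: "'p set" and N :: "'s measure" and Pm :: "'p measure"
    and f :: "'p \<Rightarrow> 's \<Rightarrow> real" and thh :: "nat \<Rightarrow> nat \<Rightarrow> (nat \<times> nat \<Rightarrow> 's) \<Rightarrow> 'p" +
  fixes th :: "nat \<Rightarrow> 'p"
  assumes th: "th \<in> bTheta K Th0 Th1"
begin

abbreviation "P \<equiv> Pth K N f th"

lemma th_in: "k < K \<Longrightarrow> th k \<in> Th0 \<union> Th1"
  using bTheta_in[OF th] .

lemma prob_space_P: "prob_space P"
  using prob_space_Pth[OF th] .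

text \<open>Real division makes both ratios vanish wherever the true likelihood does (\<open>x / 0 = 0\<close>).\<close>

definition ratio :: "nat \<Rightarrow> 'p \<Rightarrow> 's \<Rightarrow> ennreal" where
  "ratio k t y = ennreal (f t y / f (th k) y)"

definition LR :: "nat \<Rightarrow> (nat \<times> nat \<Rightarrow> 's) \<Rightarrow> ennreal" where
  "LR n w = ennreal (Lhat K f thh n w / bL K f n th w)"

lemma LR_0: "LR 0 w = 1"
  by (simp add: LR_def Lhat_def bL_def Lk_def)

lemma LR_Suc:
  assumes w: "w \<in> space (Omega K N)"
  shows "LR (Suc n) w = LR n w * (\<Prod>k<K. ratio k (thh k n w) (w (k, Suc n)))"
proof -
  define q where "q = Lhat K f thh n w / bL K f n th w"
  define r where "r k = f (thh k n w) (w (k, Suc n)) / f (th k) (w (k, Suc n))" for k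
  have q: "0 \<le> q"
    using Lhat_nonneg[OF w] bL_nonneg[OF th w] by (simp add: q_def)
  have r: "0 \<le> r k" if "k < K" for k
    using that w unfolding r_def by (intro divide_nonneg_nonneg f_nonneg thh_in th_in Omega_obs_in_space)
  have "LR (Suc n) w = ennreal (q * (\<Prod>k<K. r k))"
    by (simp add: LR_def q_def r_def Lhat_Suc bL_Suc prod_dividef times_divide_times_eq)
  also have "\<dots> = ennreal q * (\<Prod>k<K. ennreal (r k))"
    using prod_ennreal[of "{..<K}" r] r by (simp add: ennreal_mult'[OF q])
  also have "\<dots> = LR n w * (\<Prod>k<K. ratio k (thh k n w) (w (k, Suc n)))"
    by (simp add: LR_def ratio_def q_def r_def)
  finally show ?thesis .
qed

lemma LR_same_past:
  "same_past n w w' \<Longrightarrow> w \<in> space (Omega K N) \<Longrightarrow> w' \<in> space (Omega K N) \<Longrightarrow> LR n w' = LR n w"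
  by (simp add: LR_def Lhat_same_past bL_same_past)

lemma borel_measurable_LR: "LR n \<in> borel_measurable (Omega K N)"
  unfolding LR_def[abs_def]
  using borel_measurable_Lhat[of n] borel_measurable_bL[OF th, of n] by measurable

lemma borel_measurable_ratio: "k < K \<Longrightarrow> t \<in> Th0 \<union> Th1 \<Longrightarrow> ratio k t \<in> borel_measurable N"
  unfolding ratio_def[abs_def] using f_measurable[of t] f_measurable[OF th_in, of k] by measurable

lemma borel_measurable_ratio_thh:
  assumes k: "k < K"
  shows "(\<lambda>(w, y). ratio k (thh k m w) y) \<in> borel_measurable (Omega K N \<Otimes>\<^sub>M N)"
proof -
  have "(\<lambda>(w, y). (thh k m w, y)) \<in> measurable (Omega K N \<Otimes>\<^sub>M N) (Pm \<Otimes>\<^sub>M N)"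
    unfolding split_beta'
    by (intro measurable_Pair measurable_compose[OF measurable_fst thh_measurable[OF k]] measurable_snd)
  from measurable_compose[OF this fmeas]
  have "(\<lambda>(w, y). f (thh k m w) y) \<in> borel_measurable (Omega K N \<Otimes>\<^sub>M N)"
    by (simp add: split_beta')
  moreover have "(\<lambda>(w, y). f (th k) y) \<in> borel_measurable (Omega K N \<Otimes>\<^sub>M N)"
    using measurable_comp[OF measurable_snd f_measurable[OF th_in[OF k]]] by (simp add: comp_def split_beta')
  ultimately show ?thesis
    unfolding ratio_def split_beta' by measurable
qed

lemma borel_measurable_ratio_thh_obs:
  "k < K \<Longrightarrow> (\<lambda>w. ratio k (thh k m w) (w (k, s))) \<in> borel_measurable (Omega K N)"
  using measurable_compose[OF measurable_Pair[OF measurable_ident_sets[OF refl] measurable_obs]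
      borel_measurable_ratio_thh] by simp

lemma nn_integral_ratio_le_1:
  assumes k: "k < K" and t: "t \<in> Th0 \<union> Th1"
  shows "(\<integral>\<^sup>+y. ratio k t y \<partial>density N (\<lambda>x. ennreal (f (th k) x))) \<le> 1"
proof -
  have "(\<integral>\<^sup>+y. ratio k t y \<partial>density N (\<lambda>x. ennreal (f (th k) x))) =
      (\<integral>\<^sup>+y. ennreal (f (th k) y) * ratio k t y \<partial>N)"
    using f_measurable[OF th_in[OF k]] borel_measurable_ratio[OF k t] by (simp add: nn_integral_density)
  also have "\<dots> \<le> (\<integral>\<^sup>+y. ennreal (f t y) \<partial>N)"
  proof (rule nn_integral_mono)
    fix y assume y: "y \<in> space N"
    have "f (th k) y * (f t y / f (th k) y) \<le> f t y"
      using f_nonneg[OF t y] f_nonneg[OF th_in[OF k] y] by (cases "f (th k) y = 0") auto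
    then show "ennreal (f (th k) y) * ratio k t y \<le> ennreal (f t y)"
      using f_nonneg[OF th_in[OF k] y] by (simp add: ratio_def ennreal_mult'[symmetric] ennreal_leI)
  qed
  also have "\<dots> = 1"
    using nn_integral_f[OF t] .
  finally show ?thesis .
qed

lemma nn_integral_mult_ratio_le:
  assumes j: "j < K" and Q: "Q \<in> borel_measurable (Omega K N)"
    and Q_indep: "\<And>w z. w \<in> space (Omega K N) \<Longrightarrow> z \<in> space N \<Longrightarrow> Q (w((j, Suc m) := z)) = Q w"
  shows "(\<integral>\<^sup>+w. Q w * ratio j (thh j m w) (w (j, Suc m)) \<partial>P) \<le> (\<integral>\<^sup>+w. Q w \<partial>P)"
proof -
  let ?I = "{..<K} \<times> (UNIV :: nat set)"
  let ?M = "\<lambda>kn. density N (\<lambda>x. ennreal (f (th (fst kn)) x))"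
  let ?h = "\<lambda>w y. Q w * ratio j (thh j m w) y"
  have P_eq: "P = PiM ?I ?M"
    by (simp add: Pth_def)
  have M: "prob_space (?M kn)" if "kn \<in> ?I" for kn
    using that by (intro prob_space_density_f th_in) auto
  have "(\<lambda>(w, y). ?h w y) \<in> borel_measurable (Omega K N \<Otimes>\<^sub>M N)"
    using measurable_compose[OF measurable_fst Q] borel_measurable_ratio_thh[OF j]
    unfolding split_beta' by measurable
  then have h: "(\<lambda>(w, y). ?h w y) \<in> borel_measurable (PiM ?I ?M \<Otimes>\<^sub>M ?M (j, Suc m))"
    unfolding P_eq[symmetric] by (simp cong: measurable_cong_sets)
  have h_indep: "?h (w((j, Suc m) := z)) y = ?h w y"
    if "w \<in> space (PiM ?I ?M)" "z \<in> space (?M (j, Suc m))" for w z y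
  proof -
    have "w \<in> space (Omega K N)" "z \<in> space N"
      using that by (simp_all add: P_eq[symmetric] space_Pth)
    then show ?thesis
      using j by (simp add: Q_indep thh_same_past[OF same_past_fun_upd] Omega_fun_upd_in_space)
  qed
  have "(\<integral>\<^sup>+w. ?h w (w (j, Suc m)) \<partial>P) = (\<integral>\<^sup>+w. \<integral>\<^sup>+y. ?h w y \<partial>?M (j, Suc m) \<partial>P)"
    unfolding P_eq using j by (intro nn_integral_PiM_component[OF M _ h h_indep]) auto
  also have "\<dots> = (\<integral>\<^sup>+w. Q w * \<integral>\<^sup>+y. ratio j (thh j m w) y \<partial>?M (j, Suc m) \<partial>P)"
    using j by (intro nn_integral_cong nn_integral_cmult)
       (simp add: space_Pth borel_measurable_ratio[OF j thh_in[OF j]])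
  also have "\<dots> \<le> (\<integral>\<^sup>+w. Q w \<partial>P)"
  proof (intro nn_integral_mono)
    fix w assume "w \<in> space P"
    then have "(\<integral>\<^sup>+y. ratio j (thh j m w) y \<partial>?M (j, Suc m)) \<le> 1"
      using nn_integral_ratio_le_1[OF j thh_in[OF j]] by (simp add: space_Pth)
    then show "Q w * (\<integral>\<^sup>+y. ratio j (thh j m w) y \<partial>?M (j, Suc m)) \<le> Q w"
      using mult_left_mono[of _ 1 "Q w"] by simp
  qed
  finally show ?thesis .
qed

lemma nn_integral_mult_prod_ratio_le:
  assumes Q: "Q \<in> borel_measurable (Omega K N)"
    and Q_indep: "\<And>w k z. w \<in> space (Omega K N) \<Longrightarrow> k < K \<Longrightarrow> z \<in> space N \<Longrightarrow>
      Q (w((k, Suc m) := z)) = Q w"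
    and "j \<le> K"
  shows "(\<integral>\<^sup>+w. Q w * (\<Prod>k<j. ratio k (thh k m w) (w (k, Suc m))) \<partial>P) \<le> (\<integral>\<^sup>+w. Q w \<partial>P)"
  using \<open>j \<le> K\<close>
proof (induction j)
  case 0
  then show ?case by simp
next
  case (Suc j)
  define Q' where "Q' w = Q w * (\<Prod>k<j. ratio k (thh k m w) (w (k, Suc m)))" for w
  have "Q' \<in> borel_measurable (Omega K N)"
    unfolding Q'_def using Q Suc.prems
    by (intro borel_measurable_times_ennreal borel_measurable_prod_ennreal borel_measurable_ratio_thh_obs) auto
  moreover have "Q' (w((j, Suc m) := z)) = Q' w"
    if "w \<in> space (Omega K N)" "z \<in> space N" for w z
    using that Suc.prems
    by (auto simp: Q'_def Q_indep thh_same_past[OF same_past_fun_upd] Omega_fun_upd_in_space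
        intro!: prod.cong)
  ultimately have "(\<integral>\<^sup>+w. Q' w * ratio j (thh j m w) (w (j, Suc m)) \<partial>P) \<le> (\<integral>\<^sup>+w. Q' w \<partial>P)"
    using Suc.prems by (intro nn_integral_mult_ratio_le) auto
  also have "\<dots> \<le> (\<integral>\<^sup>+w. Q w \<partial>P)"
    using Suc by (simp add: Q'_def)
  finally show ?case
    by (simp add: Q'_def mult.assoc)
qed

lemma nn_integral_LR_Suc_le:
  assumes Q: "Q \<in> borel_measurable (Omega K N)"
    and Q_indep: "\<And>w k z. w \<in> space (Omega K N) \<Longrightarrow> k < K \<Longrightarrow> z \<in> space N \<Longrightarrow>
      Q (w((k, Suc m) := z)) = Q w"
  shows "(\<integral>\<^sup>+w. Q w * LR (Suc m) w \<partial>P) \<le> (\<integral>\<^sup>+w. Q w * LR m w \<partial>P)"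
proof -
  have "(\<integral>\<^sup>+w. Q w * LR (Suc m) w \<partial>P) =
      (\<integral>\<^sup>+w. (Q w * LR m w) * (\<Prod>k<K. ratio k (thh k m w) (w (k, Suc m))) \<partial>P)"
    by (intro nn_integral_cong) (simp add: space_Pth LR_Suc mult.assoc)
  also have "\<dots> \<le> (\<integral>\<^sup>+w. Q w * LR m w \<partial>P)"
    using Q borel_measurable_LR
    by (intro nn_integral_mult_prod_ratio_le)
       (auto simp: Q_indep LR_same_past[OF same_past_fun_upd] Omega_fun_upd_in_space)
  finally show ?thesis .
qed

lemma emeasure_LR_crossing_le:
  assumes a: "0 < a"
  shows "emeasure P {w\<in>space P. \<exists>n\<ge>1. ennreal a \<le> LR n w} \<le> ennreal (1 / a)"
proof (rule ville_inequality[OF a])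
  show "LR n \<in> borel_measurable P" for n
    using borel_measurable_LR by (simp cong: measurable_cong_sets add: sets_Pth)
  show "(\<integral>\<^sup>+w. LR 0 w \<partial>P) \<le> 1"
    using prob_space.emeasure_space_1[OF prob_space_P] by (simp add: LR_0)
next
  fix m
  let ?H = "{w\<in>space P. \<forall>n\<in>{1..m}. LR n w < ennreal a}"
  have "?H \<in> sets (Omega K N)"
    using borel_measurable_LR by (simp add: space_Pth) measurable
  moreover have "indicator ?H (w((k, Suc m) := z)) = (indicator ?H w :: ennreal)"
    if "w \<in> space (Omega K N)" "k < K" "z \<in> space N" for w k z
    using that by (auto simp: indicator_def space_Pth Omega_fun_upd_in_space LR_same_past[OF same_past_fun_upd])
  ultimately show "(\<integral>\<^sup>+w. indicator ?H w * LR (Suc m) w \<partial>P) \<le> (\<integral>\<^sup>+w. indicator ?H w * LR m w \<partial>P)"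
    by (intro nn_integral_LR_Suc_le) auto
qed

section \<open>Error probabilities and stopping\<close>

lemma AE_bL_pos: "AE w in P. \<forall>n. 0 < bL K f n th w"
proof -
  have "AE w in P. k < K \<longrightarrow> 0 < f (th k) (w (k, s))" for k s
  proof (cases "k < K")
    case True
    have M: "prob_space (density N (\<lambda>x. ennreal (f (th (fst i)) x)))" if "i \<in> {..<K} \<times> UNIV" for i
      using that by (intro prob_space_density_f th_in) auto
    have "AE x in density N (\<lambda>x. ennreal (f (th (fst (k, s))) x)). 0 < f (th k) x"
      using f_measurable[OF th_in[OF True]] by (simp add: AE_density)
    then have "AE w in P. 0 < f (th k) (w (k, s))"
      unfolding Pth_def using True by (intro AE_PiM_component[OF M]) auto
    then show ?thesis
      by (rule eventually_mono) simp
  qed simp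
  then have "AE w in P. \<forall>k s. k < K \<longrightarrow> 0 < f (th k) (w (k, s))"
    by (simp add: AE_all_countable)
  then show ?thesis
    by (rule eventually_mono) (auto simp: bL_def Lk_def intro!: prod_pos)
qed

lemma outer_measure_ratio_crossing_le:
  assumes a: "0 < a" and S: "S \<subseteq> space P"
    and crossing: "\<And>w. w \<in> S \<Longrightarrow> \<exists>n\<ge>1. ennreal a \<le> ennreal (Lhat K f thh n w) / ennreal (bL K f n th w)"
  shows "outer_measure_of P S \<le> ennreal (1 / a)"
proof -
  obtain Z where Z: "Z \<in> null_sets P" "{w\<in>space P. \<not> (\<forall>n. 0 < bL K f n th w)} \<subseteq> Z"
    using AE_bL_pos by (auto elim!: AE_E)
  define F where "F = {w\<in>space P. \<exists>n\<ge>1. ennreal a \<le> LR n w}"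
  have F: "F \<in> sets P"
    unfolding F_def using borel_measurable_LR by (simp add: space_Pth) measurable
  have "S \<subseteq> F \<union> Z"
  proof
    fix w assume w: "w \<in> S"
    show "w \<in> F \<union> Z"
    proof (cases "w \<in> Z")
      case False
      with w S Z(2) have pos: "0 < bL K f n th w" for n by auto
      from crossing[OF w] obtain n where "1 \<le> n"
        and "ennreal a \<le> ennreal (Lhat K f thh n w) / ennreal (bL K f n th w)" by blast
      moreover have "0 \<le> Lhat K f thh n w"
        using w S by (simp add: Lhat_nonneg space_Pth subset_iff)
      ultimately have "ennreal a \<le> LR n w"
        using pos by (simp add: LR_def divide_ennreal)
      with \<open>1 \<le> n\<close> w S show ?thesis by (auto simp: F_def)
    qed simp
  qed
  then have "outer_measure_of P S \<le> emeasure P (F \<union> Z)"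
    using F Z(1) by (metis outer_measure_of_eq outer_measure_of_mono null_setsD2 sets.Un)
  also have "\<dots> = emeasure P F"
    using F Z(1) by (rule emeasure_Un_null_set)
  also have "\<dots> \<le> ennreal (1 / a)"
    unfolding F_def using a by (rule emeasure_LR_crossing_le)
  finally show ?thesis .
qed

lemma outer_measure_false_discovery_le:
  assumes a: "0 < a"
  shows "outer_measure_of P {w\<in>space P. That K Th0 Th1 f thh a b w < \<infinity> \<and>
      Dhat K Th0 Th1 f thh a b w - sigA K Th1 th \<noteq> {}} \<le> ennreal (1 / a)"
proof (rule outer_measure_ratio_crossing_le[OF a])
  fix w assume "w \<in> {w\<in>space P. That K Th0 Th1 f thh a b w < \<infinity> \<and>
      Dhat K Th0 Th1 f thh a b w - sigA K Th1 th \<noteq> {}}"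
  then have fin: "That K Th0 Th1 f thh a b w < \<infinity>" and error: "Dhat K Th0 Th1 f thh a b w - sigA K Th1 th \<noteq> {}"
    by auto
  obtain n where n: "That K Th0 Th1 f thh a b w = enat n" "1 \<le> n" "stopcond K Th0 Th1 f thh a b n w"
    using That_finite_E[OF fin] by blast
  with error have false_discovery: "Ahat K Th0 Th1 f n w - sigA K Th1 th \<noteq> {}"
    by (simp add: Dhat_def)
  have "ennreal (bL K f n th w) \<le> LL1 K Th0 Th1 f n w"
    unfolding LL1_def using th false_discovery by (intro SUP_upper) auto
  then have "ennreal a \<le> ennreal (Lhat K f thh n w) / ennreal (bL K f n th w)"
    using n(3) unfolding stopcond_def by (blast intro: order_trans ennreal_divide_antimono)
  with n(2) show "\<exists>n\<ge>1. ennreal a \<le> ennreal (Lhat K f thh n w) / ennreal (bL K f n th w)"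
    by blast
qed auto

lemma outer_measure_missed_signal_le:
  assumes b: "0 < b"
  shows "outer_measure_of P {w\<in>space P. That K Th0 Th1 f thh a b w < \<infinity> \<and>
      sigA K Th1 th - Dhat K Th0 Th1 f thh a b w \<noteq> {}} \<le> ennreal (1 / b)"
proof (rule outer_measure_ratio_crossing_le[OF b])
  fix w assume "w \<in> {w\<in>space P. That K Th0 Th1 f thh a b w < \<infinity> \<and>
      sigA K Th1 th - Dhat K Th0 Th1 f thh a b w \<noteq> {}}"
  then have fin: "That K Th0 Th1 f thh a b w < \<infinity>" and error: "sigA K Th1 th - Dhat K Th0 Th1 f thh a b w \<noteq> {}"
    by auto
  obtain n where n: "That K Th0 Th1 f thh a b w = enat n" "1 \<le> n" "stopcond K Th0 Th1 f thh a b n w"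
    using That_finite_E[OF fin] by blast
  with error have missed_signal: "sigA K Th1 th - Ahat K Th0 Th1 f n w \<noteq> {}"
    by (simp add: Dhat_def)
  have "ennreal (bL K f n th w) \<le> LL0 K Th0 Th1 f n w"
    unfolding LL0_def using th missed_signal by (intro SUP_upper) auto
  then have "ennreal b \<le> ennreal (Lhat K f thh n w) / ennreal (bL K f n th w)"
    using n(3) unfolding stopcond_def by (blast intro: order_trans ennreal_divide_antimono)
  with n(2) show "\<exists>n\<ge>1. ennreal b \<le> ennreal (Lhat K f thh n w) / ennreal (bL K f n th w)"
    by blast
qed auto

lemma AE_eventually_exp_less:
  assumes "(\<Sum>n. outer_measure_of P {w\<in>space P. X (Suc n) w \<le> ennreal (exp (real (Suc n) * c))}) < \<infinity>"
  shows "AE w in P. eventually (\<lambda>n. ennreal (exp (real (Suc n) * c)) < X (Suc n) w) sequentially"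
proof -
  interpret prob_space P by (rule prob_space_P)
  show ?thesis
    using borel_cantelli_outer_AE[OF assms] by (simp add: not_le)
qed

lemma AE_That_finite:
  assumes C: "condC K Th0 Th1 N f thh"
    and sep0: "\<And>t0. t0 \<in> Th0 \<Longrightarrow> (INF t \<in> Th1. KL N f t0 t) > 0"
    and sep1: "\<And>t1. t1 \<in> Th1 \<Longrightarrow> (INF t \<in> Th0. KL N f t1 t) > 0"
  shows "AE w in P. That K Th0 Th1 f thh a b w < \<infinity>"
proof -
  obtain c0 c1 where c: "0 < c0" "ereal c0 < I0 K Th0 Th1 N f th" "0 < c1" "ereal c1 < I1 K Th0 Th1 N f th"
    using I0_pos[OF th sep0] I1_pos[OF th sep1] by (metis ereal_dense2 ereal_less(2))
  have "AE w in P. eventually (\<lambda>n. ennreal (exp (real (Suc n) * c0)) <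
      ennreal (Lhat K f thh (Suc n) w) / LL0 K Th0 Th1 f (Suc n) w) sequentially"
    by (rule AE_eventually_exp_less[where X="\<lambda>n w. ennreal (Lhat K f thh n w) / LL0 K Th0 Th1 f n w"])
       (use C th c(2) in \<open>simp add: condC_def\<close>)
  moreover have "AE w in P. eventually (\<lambda>n. ennreal (exp (real (Suc n) * c1)) <
      ennreal (Lhat K f thh (Suc n) w) / LL1 K Th0 Th1 f (Suc n) w) sequentially"
    by (rule AE_eventually_exp_less[where X="\<lambda>n w. ennreal (Lhat K f thh n w) / LL1 K Th0 Th1 f n w"])
       (use C th c(4) in \<open>simp add: condC_def\<close>)
  ultimately show ?thesis
  proof eventually_elim
    case (elim w)
    from elim eventually_le_exp_mult[OF c(1), of b] eventually_le_exp_mult[OF c(3), of a]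
    have "eventually (\<lambda>n. stopcond K Th0 Th1 f thh a b (Suc n) w) sequentially"
      unfolding stopcond_def by eventually_elim (meson ennreal_leI less_imp_le order_trans)
    then obtain n where "stopcond K Th0 Th1 f thh a b (Suc n) w"
      by (auto simp: eventually_sequentially)
    then have "\<exists>n\<ge>1. stopcond K Th0 Th1 f thh a b n w"
      by (intro exI[of _ "Suc n"]) simp
    then show ?case
      by (simp add: That_def)
  qed
qed

lemma error_probabilities:
  assumes "condC K Th0 Th1 N f thh"
    and "\<And>t0. t0 \<in> Th0 \<Longrightarrow> (INF t \<in> Th1. KL N f t0 t) > 0"
    and "\<And>t1. t1 \<in> Th1 \<Longrightarrow> (INF t \<in> Th0. KL N f t1 t) > 0"
    and "0 < a" "0 < b"
  shows "(AE w in P. That K Th0 Th1 f thh a b w < \<infinity>) \<and>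
    outer_measure_of P {w\<in>space P. That K Th0 Th1 f thh a b w < \<infinity> \<and>
      Dhat K Th0 Th1 f thh a b w - sigA K Th1 th \<noteq> {}} \<le> ennreal (1 / a) \<and>
    outer_measure_of P {w\<in>space P. That K Th0 Th1 f thh a b w < \<infinity> \<and>
      sigA K Th1 th - Dhat K Th0 Th1 f thh a b w \<noteq> {}} \<le> ennreal (1 / b)"
  using AE_That_finite[OF assms(1-3)] outer_measure_false_discovery_le[OF assms(4)]
    outer_measure_missed_signal_le[OF assms(5)] by blast


end

theorem theorem2:
  fixes K :: nat and Th0 Th1 :: "'p set" and N :: "'s measure" and Pm :: "'p measure"
    and f :: "'p \<Rightarrow> 's \<Rightarrow> real"
    and thh :: "nat \<Rightarrow> nat \<Rightarrow> (nat \<times> nat \<Rightarrow> 's) \<Rightarrow> 'p"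
  assumes K: "K \<ge> 1"
    and Th: "Th0 \<noteq> {}" "Th1 \<noteq> {}" "Th0 \<inter> Th1 = {}"
    and sfin: "sigma_finite_measure N"
    and dens: "\<And>t. t \<in> Th0 \<union> Th1 \<Longrightarrow> f t \<in> borel_measurable N \<and> (\<forall>x\<in>space N. f t x \<ge> 0)
                       \<and> (\<integral>\<^sup>+ x. ennreal (f t x) \<partial>N) = 1"
    and fmeas: "(\<lambda>(t, x). f t x) \<in> borel_measurable (Pm \<Otimes>\<^sub>M N)"
    and sep0: "\<And>t0. t0 \<in> Th0 \<Longrightarrow> (INF t \<in> Th1. KL N f t0 t) > 0"
    and sep1: "\<And>t1. t1 \<in> Th1 \<Longrightarrow> (INF t \<in> Th0. KL N f t1 t) > 0"
    and mle: "near_mle K Th0 Th1 N Pm f thh"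
    and C: "condC K Th0 Th1 N f thh"
  shows "(\<forall>th\<in>bTheta K Th0 Th1. \<forall>a b. a > 0 \<and> b > 0 \<longrightarrow>
            (AE \<omega> in Pth K N f th. That K Th0 Th1 f thh a b \<omega> < \<infinity>) \<and>
            outer_measure_of (Pth K N f th)
              {\<omega>\<in>space (Pth K N f th). That K Th0 Th1 f thh a b \<omega> < \<infinity> \<and>
                   Dhat K Th0 Th1 f thh a b \<omega> - sigA K Th1 th \<noteq> {}} \<le> ennreal (1 / a) \<and>
            outer_measure_of (Pth K N f th)
              {\<omega>\<in>space (Pth K N f th). That K Th0 Th1 f thh a b \<omega> < \<infinity> \<and>
                   sigA K Th1 th - Dhat K Th0 Th1 f thh a b \<omega> \<noteq> {}} \<le> ennreal (1 / b))
       \<and> (\<forall>\<alpha> \<beta>::real. 0 < \<alpha> \<and> \<alpha> < 1 \<and> 0 < \<beta> \<and> \<beta> < 1 \<longrightarrow>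
            in_Delta K Th0 Th1 N f (That K Th0 Th1 f thh (1 / \<alpha>) (1 / \<beta>))
                                   (Dhat K Th0 Th1 f thh (1 / \<alpha>) (1 / \<beta>)) \<alpha> \<beta>)"
proof -
  have model: "multistream_test K Th0 Th1 N Pm f thh"
    using dens fmeas mle by unfold_locales
  then interpret multistream_test K Th0 Th1 N Pm f thh .
  have "multistream_test_at K Th0 Th1 N Pm f thh th" if "th \<in> bTheta K Th0 Th1" for th
    using model that by (simp add: multistream_test_at_def multistream_test_at_axioms_def)
  note errors = multistream_test_at.error_probabilities[OF this C sep0 sep1]
  have "in_Delta K Th0 Th1 N f (That K Th0 Th1 f thh (1 / \<alpha>) (1 / \<beta>))
      (Dhat K Th0 Th1 f thh (1 / \<alpha>) (1 / \<beta>)) \<alpha> \<beta>" if "0 < \<alpha>" "0 < \<beta>" for \<alpha> \<beta> :: real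
  proof -
    have "0 < 1 / \<alpha>" "0 < 1 / \<beta>" and reciprocal: "1 / (1 / \<alpha>) = \<alpha>" "1 / (1 / \<beta>) = \<beta>"
      using that by simp_all
    with errors[where a="1 / \<alpha>" and b="1 / \<beta>", unfolded reciprocal] show ?thesis
      unfolding in_Delta_def using Dhat_subset That_Dhat_adapted by blast
  qed
  with errors show ?thesis
    by blast
qed

end
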